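(* Let $\gamma_1,\dots,\gamma_k$ be distinct real numbers, and for a natural number $N$ and real $x$ define \[A_N(x)=\lim_{T\to\infty}\frac1{2T}\int_{-T}^T|1+e^{it\gamma_1}+\cdots+e^{it\gamma_k}|^{2N}e^{itx}\,\mathrm dt.\] (a) $A_N(0)\gg_k(k+1)^{2N}N^{-k/2}$. (b) Let $\varepsilon>0$ and $j\in\{1,\dots,k\}$. If $N$ is large enough in terms of $\varepsilon$ and $k$, then $A_N(\gamma_j)\ge(1-\varepsilon)A_N(0)$. *)

theory Defs
  imports "HOL-Analysis.Analysis"
begin

definition expsum :: "nat \<Rightarrow> (nat \<Rightarrow> real) \<Rightarrow> real \<Rightarrow> complex" where
  "expsum k \<gamma> t = 1 + (\<Sum>j\<in>{1..k}. exp (\<i> * complex_of_real (t * \<gamma> j)))"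

definition A :: "nat \<Rightarrow> (nat \<Rightarrow> real) \<Rightarrow> nat \<Rightarrow> real \<Rightarrow> complex" where
  "A k \<gamma> N x = Lim at_top (\<lambda>T::real.
      integral {-T..T} (\<lambda>t. complex_of_real (norm (expsum k \<gamma> t) ^ (2 * N))
                                * exp (\<i> * complex_of_real (t * x)))
      / complex_of_real (2 * T))"

end

theory Submission
  imports Defs
begin

text \<open>
  Write \<open>F(t) = \<Sum>i=0..k. exp (\<i> t \<gamma>\<^sub>i)\<close> with \<open>\<gamma>\<^sub>0 = 0\<close>. Expanding
  \<open>|F(t)|^(2N) exp (\<i> t x)\<close> over pairs of words \<open>(s, s')\<close> of length \<open>N\<close> in the letters
  \<open>0, ..., k\<close> turns \<open>A\<^sub>N(x)\<close> into the number of pairs with \<open>\<Lambda> s + x = \<Lambda> s'\<close>,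
  where \<open>\<Lambda>\<close> adds up the frequencies of the letters of a word.

  (a) Words with the same letter counts have the same \<open>\<Lambda>\<close>. By Chebyshev's inequality at
  least \<open>3/4\<close> of the \<open>(k+1)^N\<close> words have all counts within \<open>sqrt (k N)\<close> of
  \<open>N/(k+1)\<close>; these fall into \<open>O(N^(k/2))\<close> count classes, so Cauchy--Schwarz gives
  \<open>\<gg> (k+1)^(2N) N^(-k/2)\<close> pairs with equal \<open>\<Lambda>\<close>.

  (b) Changing one letter \<open>0\<close> of \<open>s'\<close> into \<open>j\<close> turns a solution at \<open>0\<close> into a
  solution at \<open>\<gamma>\<^sub>j\<close>, injectively once the position of the change is recorded. Hence the
  number of letters \<open>0\<close> in \<open>s'\<close>, summed over the solutions at \<open>0\<close>, is at most the
  number of letters \<open>j\<close>, summed over the solutions at \<open>\<gamma>\<^sub>j\<close>; for typical \<open>s'\<close> both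
  counts are close to \<open>N/(k+1)\<close>. Atypical words are exponentially rare by a Chernoff
  bound, and each \<open>s'\<close> lies in at most \<open>sqrt (A\<^sub>N(0))\<close> solutions because a level set of
  \<open>\<Lambda>\<close> has at most that size, so by (a) the atypical pairs are negligible.
\<close>

section \<open>Words and letter counts\<close>

definition words :: "'a set \<Rightarrow> nat \<Rightarrow> 'a list set" where
  "words X n = {xs. set xs \<subseteq> X \<and> length xs = n}"

definition count_in :: "'a set \<Rightarrow> 'a list \<Rightarrow> nat" where
  "count_in S xs = length (filter (\<lambda>x. x \<in> S) xs)"

lemma finite_words [simp]: "finite X \<Longrightarrow> finite (words X n)"
  unfolding words_def by (rule finite_lists_length_eq)

lemma card_words: "finite X \<Longrightarrow> card (words X n) = card X ^ n"
  unfolding words_def by (rule card_lists_length_eq)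

lemma words_0 [simp]: "words X 0 = {[]}"
  unfolding words_def by auto

lemma words_Suc: "words X (Suc n) = (\<lambda>(x, xs). x # xs) ` (X \<times> words X n)"
  unfolding words_def by (auto simp: image_iff length_Suc_conv)

lemma sum_words_Suc:
  "(\<Sum>xs\<in>words X (Suc n). f xs) = (\<Sum>x\<in>X. \<Sum>xs\<in>words X n. f (x # xs))"
proof -
  have "inj_on (\<lambda>(x, xs). x # xs) (X \<times> words X n)"
    by (auto simp: inj_on_def)
  then show ?thesis
    by (simp add: words_Suc sum.reindex sum.cartesian_product case_prod_unfold)
qed

lemma sum_words_prod_list:
  fixes f :: "'a \<Rightarrow> 'b::comm_semiring_1"
  shows "(\<Sum>xs\<in>words X n. \<Prod>x\<leftarrow>xs. f x) = (\<Sum>x\<in>X. f x) ^ n"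
proof (induction n)
  case (Suc n)
  have "(\<Sum>xs\<in>words X (Suc n). \<Prod>x\<leftarrow>xs. f x) = (\<Sum>x\<in>X. f x * (\<Sum>xs\<in>words X n. \<Prod>x\<leftarrow>xs. f x))"
    by (simp add: sum_words_Suc sum_distrib_left)
  then show ?case
    by (simp add: Suc sum_distrib_right)
qed simp

lemma count_in_Nil [simp]: "count_in S [] = 0"
  and count_in_Cons [simp]: "count_in S (x # xs) = of_bool (x \<in> S) + count_in S xs"
  by (simp_all add: count_in_def)

lemma count_in_singleton: "count_in {a} xs = count_list xs a"
  by (induction xs) auto

lemma
  fixes S X :: "'a set" and P :: real
  assumes "finite X" "S \<subseteq> X"
  defines "P \<equiv> card S / card X"
  shows sum_of_bool_minus_mean: "(\<Sum>x\<in>X. of_bool (x \<in> S) - P) = 0"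
    and sum_of_bool_minus_mean_squared: "(\<Sum>x\<in>X. (of_bool (x \<in> S) - P)\<^sup>2) = card X * P * (1 - P)"
proof -
  have card: "(\<Sum>x\<in>X. of_bool (x \<in> S)) = real (card S)"
    using assms by (simp add: sum_of_bool_eq Int_absorb1 Int_absorb2)
  show "(\<Sum>x\<in>X. of_bool (x \<in> S) - P) = 0"
    using card by (cases "X = {}") (simp_all add: sum_subtractf P_def assms)
  have sq: "(of_bool (x \<in> S) - P)\<^sup>2 = of_bool (x \<in> S) * (1 - 2 * P) + P\<^sup>2" for x
    by (simp add: power2_eq_square algebra_simps)
  show "(\<Sum>x\<in>X. (of_bool (x \<in> S) - P)\<^sup>2) = card X * P * (1 - P)"
    unfolding sq sum.distrib sum_distrib_right[symmetric] card
    using assms by (cases "X = {}") (simp_all add: P_def power2_eq_square field_simps)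
qed

lemma sum_words_count_in_variance:
  fixes S X :: "'a set" and P :: real
  assumes "finite X" "S \<subseteq> X"
  defines "P \<equiv> card S / card X"
  shows "(\<Sum>xs\<in>words X n. (count_in S xs - n * P)\<^sup>2) = n * P * (1 - P) * card X ^ n"
proof (induction n)
  case 0
  then show ?case by simp
next
  case (Suc n)
  define a where "a x = of_bool (x \<in> S) - P" for x
  define D where "D xs = real (count_in S xs) - n * P" for xs
  have "(\<Sum>xs\<in>words X (Suc n). (count_in S xs - Suc n * P)\<^sup>2)
      = (\<Sum>x\<in>X. \<Sum>xs\<in>words X n. (a x)\<^sup>2 + 2 * a x * D xs + (D xs)\<^sup>2)"
    by (simp add: sum_words_Suc a_def D_def power2_eq_square algebra_simps)
  also have "\<dots> = (\<Sum>x\<in>X. (a x)\<^sup>2) * card X ^ n + 2 * (\<Sum>x\<in>X. a x) * (\<Sum>xs\<in>words X n. D xs)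
      + card X * (\<Sum>xs\<in>words X n. (D xs)\<^sup>2)"
    using assms(1) by (simp add: sum.distrib sum_distrib_left sum_distrib_right card_words
        mult.assoc mult.left_commute[of 2] mult.commute[of "_ ^ n"] sum.swap[of _ X])
  also have "\<dots> = Suc n * P * (1 - P) * card X ^ Suc n"
  proof -
    have "(\<Sum>x\<in>X. a x) = 0" and sq: "(\<Sum>x\<in>X. (a x)\<^sup>2) = card X * P * (1 - P)"
      unfolding a_def P_def using assms(1,2)
      by (rule sum_of_bool_minus_mean, rule sum_of_bool_minus_mean_squared)
    moreover have "(\<Sum>xs\<in>words X n. (D xs)\<^sup>2) = n * P * (1 - P) * card X ^ n"
      using Suc by (simp add: D_def)
    ultimately show ?thesis
      by (simp only: sq) (simp add: algebra_simps)
  qed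
  finally show ?case .
qed

lemma card_words_count_in_deviation_le:
  fixes S X :: "'a set" and P \<tau> :: real
  assumes "finite X" "S \<subseteq> X"
  defines "P \<equiv> card S / card X"
  shows "card {xs\<in>words X n. \<tau> < (count_in S xs - n * P)\<^sup>2} * \<tau> \<le> n * card X ^ n / 4"
proof -
  let ?B = "{xs\<in>words X n. \<tau> < (count_in S xs - n * P)\<^sup>2}"
  have "card ?B * \<tau> = (\<Sum>xs\<in>?B. \<tau>)"
    by simp
  also have "\<dots> \<le> (\<Sum>xs\<in>?B. (count_in S xs - n * P)\<^sup>2)"
    by (rule sum_mono) simp
  also have "\<dots> \<le> (\<Sum>xs\<in>words X n. (count_in S xs - n * P)\<^sup>2)"
    using assms(1) by (intro sum_mono2) auto
  also have "\<dots> = n * (P * (1 - P)) * card X ^ n"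
    using sum_words_count_in_variance[OF assms(1,2), of n] by (simp add: P_def)
  also have "\<dots> \<le> n * (1 / 4) * card X ^ n"
  proof -
    have "P * (1 - P) \<le> 1 / 4"
      using zero_le_power2[of "P - 1 / 2"] by (simp add: power2_eq_square algebra_simps)
    then show ?thesis
      by (intro mult_right_mono mult_left_mono) auto
  qed
  finally show ?thesis
    by simp
qed

lemma sum_words_exp_count_in:
  fixes l :: real
  shows "(\<Sum>xs\<in>words X n. exp (l * count_in S xs)) = (\<Sum>x\<in>X. exp (l * of_bool (x \<in> S))) ^ n"
proof -
  have "exp (l * count_in S xs) = (\<Prod>x\<leftarrow>xs. exp (l * of_bool (x \<in> S)))" for xs
    by (induction xs) (simp_all add: distrib_left exp_add)
  then show ?thesis
    by (simp add: sum_words_prod_list)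
qed

lemma sum_exp_of_bool_le:
  fixes S X :: "'a set" and P l :: real
  assumes "finite X" "S \<subseteq> X" "0 \<le> l" "l \<le> 1"
  defines "P \<equiv> card S / card X"
  shows "(\<Sum>x\<in>X. exp (l * of_bool (x \<in> S))) \<le> card X * exp (P * l + l\<^sup>2)"
proof -
  have P: "0 \<le> P" "P \<le> 1"
    using assms card_mono[OF assms(1,2)] by (auto simp: P_def divide_le_eq_1 card_gt_0_iff)
  have "exp (l * of_bool (x \<in> S)) = 1 + (exp l - 1) * of_bool (x \<in> S)" for x
    by simp
  then have "(\<Sum>x\<in>X. exp (l * of_bool (x \<in> S))) = card X + (exp l - 1) * card S"
    using assms(1,2) by (simp add: sum.distrib flip: sum_distrib_left)
      (simp add: sum_of_bool_eq Int_absorb1 Int_absorb2)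
  also have "\<dots> = card X * (1 + P * (exp l - 1))"
    using assms(1,2) by (cases "X = {}") (auto simp: P_def field_simps)
  also have "\<dots> \<le> card X * exp (P * l + l\<^sup>2)"
  proof (rule mult_left_mono)
    have "1 + P * (exp l - 1) \<le> 1 + P * (l + l\<^sup>2)"
      using exp_bound[OF assms(3,4)] P by (intro add_left_mono mult_left_mono) auto
    also have "\<dots> \<le> 1 + (P * l + l\<^sup>2)"
      using P by (simp add: algebra_simps mult_left_le_one_le)
    also have "\<dots> \<le> exp (P * l + l\<^sup>2)"
      by (rule exp_ge_add_one_self)
    finally show "1 + P * (exp l - 1) \<le> exp (P * l + l\<^sup>2)" .
  qed simp
  finally show ?thesis .
qed

text \<open>Markov's inequality for \<open>exp (d / 2 * count_in S xs)\<close>.\<close>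
lemma card_words_count_in_large_le:
  fixes S X :: "'a set" and P d :: real
  assumes "finite X" "S \<subseteq> X" "0 \<le> d" "d \<le> 2"
  defines "P \<equiv> card S / card X"
  shows "card {xs\<in>words X n. n * (P + d) \<le> count_in S xs} \<le> exp (- real n * d\<^sup>2 / 4) * card X ^ n"
proof -
  let ?B = "{xs\<in>words X n. n * (P + d) \<le> count_in S xs}"
  define l where "l = d / 2"
  have l: "0 \<le> l" "l \<le> 1"
    using assms by (simp_all add: l_def)
  have "card ?B * exp (l * (n * (P + d))) = (\<Sum>xs\<in>?B. exp (l * (n * (P + d))))"
    by simp
  also have "\<dots> \<le> (\<Sum>xs\<in>?B. exp (l * count_in S xs))"
    using l by (intro sum_mono) (simp add: mult_left_mono)
  also have "\<dots> \<le> (\<Sum>xs\<in>words X n. exp (l * count_in S xs))"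
    using assms(1) by (intro sum_mono2) auto
  also have "\<dots> \<le> (card X * exp (P * l + l\<^sup>2)) ^ n"
    unfolding sum_words_exp_count_in P_def
    by (rule power_mono[OF sum_exp_of_bool_le[OF assms(1,2) l]]) (simp add: sum_nonneg)
  also have "\<dots> = card X ^ n * exp (n * (P * l + l\<^sup>2))"
    by (simp add: power_mult_distrib exp_of_nat_mult)
  finally have "card ?B \<le> card X ^ n * exp (n * (P * l + l\<^sup>2)) / exp (l * (n * (P + d)))"
    by (simp add: pos_le_divide_eq)
  also have "\<dots> = exp (n * (P * l + l\<^sup>2) - l * (n * (P + d))) * card X ^ n"
    by (simp add: exp_diff)
  also have "n * (P * l + l\<^sup>2) - l * (n * (P + d)) = - real n * d\<^sup>2 / 4"
    by (simp add: l_def power2_eq_square algebra_simps)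
  finally show ?thesis .
qed

section \<open>Elementary counting\<close>

lemma card_square_le_card_image_mult_card_collisions:
  assumes "finite S"
  shows "(card S)\<^sup>2 \<le> card (f ` S) * card {(x, y)\<in>S \<times> S. f x = f y}"
proof -
  define fibre where "fibre v = {x\<in>S. f x = v}" for v
  have "card S = (\<Sum>v\<in>f ` S. card (fibre v))"
    using card_eq_sum[of S] sum.image_gen[OF assms, of "\<lambda>_. 1::nat" f] by (simp add: fibre_def)
  moreover have "{(x, y)\<in>S \<times> S. f x = f y} = (SIGMA x:S. fibre (f x))"
    by (auto simp: fibre_def)
  then have "card {(x, y)\<in>S \<times> S. f x = f y} = (\<Sum>v\<in>f ` S. (card (fibre v))\<^sup>2)"
    using assms sum.image_gen[OF assms, of "\<lambda>x. card (fibre (f x))" f]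
    by (simp add: fibre_def power2_eq_square)
  moreover have "(\<Sum>v\<in>f ` S. real (card (fibre v)))\<^sup>2 \<le> (\<Sum>v\<in>f ` S. (real (card (fibre v)))\<^sup>2) * card (f ` S)"
    by (rule sum_squared_le_sum_of_squares)
  ultimately have "real ((card S)\<^sup>2) \<le> real (card (f ` S) * card {(x, y)\<in>S \<times> S. f x = f y})"
    by (simp add: mult.commute)
  then show ?thesis
    by (simp only: of_nat_le_iff)
qed

lemma card_fibre_square_le_card_collisions:
  assumes "finite S"
  shows "(card {x\<in>S. f x = v})\<^sup>2 \<le> card {(x, y)\<in>S \<times> S. f x = f y}"
proof -
  let ?F = "{x\<in>S. f x = v}"
  have "?F \<times> ?F \<subseteq> {(x, y)\<in>S \<times> S. f x = f y}"
    by auto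
  moreover have "finite {(x, y)\<in>S \<times> S. f x = f y}"
    using assms by (auto intro: finite_subset[of _ "S \<times> S"])
  ultimately have "card (?F \<times> ?F) \<le> card {(x, y)\<in>S \<times> S. f x = f y}"
    by (rule card_mono[rotated])
  then show ?thesis
    by (simp only: power2_eq_square card_cartesian_product)
qed

lemma finite_nat_abs_diff_le: "finite {a::nat. \<bar>real a - c\<bar> \<le> r}"
proof (rule finite_subset)
  have "a \<le> nat \<lfloor>c + r\<rfloor>" if "real a \<le> c + r" for a
    using that by (simp add: le_nat_iff le_floor_iff)
  then show "{a::nat. \<bar>real a - c\<bar> \<le> r} \<subseteq> {..nat \<lfloor>c + r\<rfloor>}"
    by auto
qed simp

lemma card_nat_abs_diff_le:
  assumes "0 \<le> r"
  shows "real (card {a::nat. \<bar>real a - c\<bar> \<le> r}) \<le> 2 * r + 1"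
proof (cases "{a::nat. \<bar>real a - c\<bar> \<le> r} = {}")
  case False
  let ?W = "{a::nat. \<bar>real a - c\<bar> \<le> r}"
  note fin = finite_nat_abs_diff_le[of c r]
  have "card ?W \<le> card {Min ?W..Max ?W}"
    using fin by (intro card_mono) auto
  moreover have "Min ?W \<le> Suc (Max ?W)"
    using Min_le[OF fin Max_in[OF fin False]] by simp
  ultimately have "real (card ?W) \<le> real (Max ?W) + 1 - real (Min ?W)"
    by (simp add: of_nat_diff)
  moreover have "\<bar>real (Max ?W) - c\<bar> \<le> r" "\<bar>real (Min ?W) - c\<bar> \<le> r"
    using Max_in[OF fin False] Min_in[OF fin False] by auto
  ultimately show ?thesis
    by linarith
qed (use assms in simp)

lemma sum_ge_off_exceptional:
  fixes f :: "'a \<Rightarrow> real"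
  assumes "finite P" "\<And>p. p \<in> P \<Longrightarrow> \<not> bad p \<Longrightarrow> c \<le> f p" "\<And>p. p \<in> P \<Longrightarrow> 0 \<le> f p"
  shows "c * card P - c * card {p\<in>P. bad p} \<le> sum f P"
proof -
  have "{p\<in>P. \<not> bad p} = P - {p\<in>P. bad p}"
    by auto
  then have "card {p\<in>P. \<not> bad p} = card P - card {p\<in>P. bad p}"
    using assms(1) by (simp add: card_Diff_subset)
  then have "c * card P - c * card {p\<in>P. bad p} = c * card {p\<in>P. \<not> bad p}"
    using assms(1) by (simp add: card_mono algebra_simps)
  also have "\<dots> \<le> (\<Sum>p\<in>{p\<in>P. \<not> bad p}. f p)"
    using sum_bounded_below[of "{p\<in>P. \<not> bad p}" c f] assms(2) by (simp add: mult.commute)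
  also have "\<dots> \<le> sum f P"
    using assms(1,3) by (intro sum_mono2) auto
  finally show ?thesis .
qed

lemma sum_le_off_exceptional:
  fixes f :: "'a \<Rightarrow> real"
  assumes "finite P" "\<And>p. p \<in> P \<Longrightarrow> \<not> bad p \<Longrightarrow> f p \<le> c" "\<And>p. p \<in> P \<Longrightarrow> f p \<le> M" "0 \<le> c"
  shows "sum f P \<le> c * card P + M * card {p\<in>P. bad p}"
proof -
  have "sum f P = (\<Sum>p\<in>{p\<in>P. \<not> bad p}. f p) + (\<Sum>p\<in>{p\<in>P. bad p}. f p)"
    using sum.Int_Diff[OF assms(1), of f "{p. bad p}"] by (simp add: Int_def set_diff_eq add.commute)
  also have "\<dots> \<le> c * card {p\<in>P. \<not> bad p} + M * card {p\<in>P. bad p}"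
    using assms(2,3) by (intro add_mono sum_bounded_above[THEN order_trans]) (auto simp: mult.commute)
  also have "\<dots> \<le> c * card P + M * card {p\<in>P. bad p}"
    using assms(1,4) by (intro add_right_mono mult_left_mono) (auto intro: card_mono)
  finally show ?thesis .
qed

lemma count_list_eq_card_positions: "count_list xs a = card {l. l < length xs \<and> xs ! l = a}"
  by (simp add: count_list_eq_length_filter length_filter_conv_card eq_commute)

lemma inj_on_update_snd_at_known_entry:
  "inj_on (\<lambda>((s, s'), l). ((s, s'[l := b]), l)) {((s, s'), l). s' ! l = a}"
proof (rule inj_onI)
  fix p q assume "p \<in> {((s, s'), l). s' ! l = a}" "q \<in> {((s, s'), l). s' ! l = a}"
    and "(\<lambda>((s, s'), l). ((s, s'[l := b]), l)) p = (\<lambda>((s, s'), l). ((s, s'[l := b]), l)) q"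
  moreover obtain s s' l t t' m where "p = ((s, s'), l)" "q = ((t, t'), m)"
    by (metis prod.collapse)
  ultimately show "p = q"
    by auto (metis list_update_id list_update_overwrite)
qed

section \<open>Mean values of exponential sums\<close>

lemma norm_integral_exp_i_le:
  fixes a T :: real
  assumes "a \<noteq> 0" "0 \<le> T"
  shows "norm (integral {-T..T} (\<lambda>t. exp (\<i> * of_real (t * a)))) \<le> 2 / \<bar>a\<bar>"
proof -
  define F where "F = (\<lambda>t. exp (\<i> * of_real (t * a)) / (\<i> * of_real a))"
  have "(F has_vector_derivative exp (\<i> * of_real (t * a))) (at t within {-T..T})" for t
  proof -
    have scale: "s *\<^sub>R (\<i> * of_real a) = \<i> * of_real (s * a)" for s
      by (simp add: scaleR_conv_of_real algebra_simps)
    have "((\<lambda>s. exp (s *\<^sub>R (\<i> * of_real a)) / (\<i> * of_real a)) has_vector_derivative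
            exp (t *\<^sub>R (\<i> * of_real a)) * (\<i> * of_real a) / (\<i> * of_real a)) (at t within {-T..T})"
      by (intro has_vector_derivative_divide exp_scaleR_has_vector_derivative_right)
    then show ?thesis
      using assms(1) by (simp add: F_def scale)
  qed
  then have "((\<lambda>t. exp (\<i> * of_real (t * a))) has_integral F T - F (-T)) {-T..T}"
    using assms(2) by (intro fundamental_theorem_of_calculus) auto
  then have "integral {-T..T} (\<lambda>t. exp (\<i> * of_real (t * a))) = F T - F (-T)"
    by (rule integral_unique)
  also have "norm \<dots> \<le> norm (F T) + norm (F (-T))"
    by (rule norm_triangle_ineq4)
  also have "\<dots> = 2 / \<bar>a\<bar>"
    by (simp add: F_def norm_divide norm_mult)
  finally show ?thesis .
qed

lemma tendsto_mean_exp_i: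
  fixes a :: real
  shows "((\<lambda>T. integral {-T..T} (\<lambda>t. exp (\<i> * of_real (t * a))) / of_real (2 * T))
           \<longlongrightarrow> of_bool (a = 0)) at_top"
proof (cases "a = 0")
  case True
  have "\<forall>\<^sub>F T in at_top. integral {-T..T} (\<lambda>t. exp (\<i> * of_real (t * a))) / of_real (2 * T) = 1"
    using eventually_gt_at_top[of 0] by eventually_elim (simp add: True scaleR_conv_of_real)
  then show ?thesis
    using True by (simp add: tendsto_eventually)
next
  case False
  have "\<forall>\<^sub>F T in at_top. norm (integral {-T..T} (\<lambda>t. exp (\<i> * of_real (t * a))) / of_real (2 * T))
          \<le> inverse \<bar>a\<bar> * inverse T"
    using eventually_gt_at_top[of 0]
  proof eventually_elim
    case (elim T)
    then show ?case
      using norm_integral_exp_i_le[OF False, of T] by (simp add: norm_divide field_simps)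
  qed
  moreover have "((\<lambda>T. inverse \<bar>a\<bar> * inverse T) \<longlongrightarrow> 0) at_top"
    by (intro tendsto_mult_right_zero tendsto_inverse_0_at_top filterlim_ident)
  ultimately show ?thesis
    using False by (simp add: Lim_null_comparison)
qed

lemma tendsto_mean_sum_exp_i:
  fixes a :: "'p \<Rightarrow> real"
  assumes "finite P"
  shows "((\<lambda>T. integral {-T..T} (\<lambda>t. \<Sum>p\<in>P. exp (\<i> * of_real (t * a p))) / of_real (2 * T))
           \<longlongrightarrow> of_nat (card {p\<in>P. a p = 0})) at_top"
proof -
  have integrable: "(\<lambda>t. exp (\<i> * of_real (t * a p))) integrable_on {-T..T}" for p T
    by (intro integrable_continuous_interval continuous_intros)
  have "integral {-T..T} (\<lambda>t. \<Sum>p\<in>P. exp (\<i> * of_real (t * a p))) / of_real (2 * T)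
      = (\<Sum>p\<in>P. integral {-T..T} (\<lambda>t. exp (\<i> * of_real (t * a p))) / of_real (2 * T))" for T
    using assms integrable
    by (simp add: Henstock_Kurzweil_Integration.integral_sum sum_divide_distrib)
  moreover have "((\<lambda>T. \<Sum>p\<in>P. integral {-T..T} (\<lambda>t. exp (\<i> * of_real (t * a p))) / of_real (2 * T))
      \<longlongrightarrow> (\<Sum>p\<in>P. of_bool (a p = 0))) at_top"
    by (intro tendsto_sum tendsto_mean_exp_i)
  ultimately show ?thesis
    using assms by (simp add: sum_of_bool_eq Int_def)
qed

text \<open>Letter \<open>0\<close> stands for the summand \<open>1\<close> of \<^const>\<open>expsum\<close>; \<open>word_freq\<close> is the
  \<open>\<Lambda>\<close> of the introduction.\<close>
definition freq :: "(nat \<Rightarrow> real) \<Rightarrow> nat \<Rightarrow> real" where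
  "freq \<gamma> i = (if i = 0 then 0 else \<gamma> i)"

definition word_freq :: "(nat \<Rightarrow> real) \<Rightarrow> nat list \<Rightarrow> real" where
  "word_freq \<gamma> xs = (\<Sum>i\<leftarrow>xs. freq \<gamma> i)"

definition solutions :: "nat \<Rightarrow> (nat \<Rightarrow> real) \<Rightarrow> nat \<Rightarrow> real \<Rightarrow> (nat list \<times> nat list) set" where
  "solutions k \<gamma> N x =
     {(s, s'). s \<in> words {0..k} N \<and> s' \<in> words {0..k} N \<and> word_freq \<gamma> s + x = word_freq \<gamma> s'}"

lemma finite_solutions [simp]: "finite (solutions k \<gamma> N x)"
  by (rule finite_subset[of _ "words {0..k} N \<times> words {0..k} N"]) (auto simp: solutions_def)

lemma expsum_eq_sum_freq: "expsum k \<gamma> t = (\<Sum>i\<in>{0..k}. exp (\<i> * of_real (t * freq \<gamma> i)))"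
proof -
  have "{0..k} = insert 0 {1..k}"
    by auto
  then show ?thesis
    by (simp add: expsum_def freq_def)
qed

lemma expsum_power_eq_sum_words:
  "expsum k \<gamma> t ^ N = (\<Sum>s\<in>words {0..k} N. exp (\<i> * of_real (t * word_freq \<gamma> s)))"
proof -
  have "exp (\<i> * of_real (t * word_freq \<gamma> s)) = (\<Prod>i\<leftarrow>s. exp (\<i> * of_real (t * freq \<gamma> i)))" for s
    by (induction s) (simp_all add: word_freq_def distrib_left exp_add)
  then show ?thesis
    by (simp add: expsum_eq_sum_freq sum_words_prod_list)
qed

lemma norm_expsum_power_mult_exp_i:
  "of_real (norm (expsum k \<gamma> t) ^ (2 * N)) * exp (\<i> * of_real (t * x))
     = (\<Sum>(s, s')\<in>words {0..k} N \<times> words {0..k} N.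
          exp (\<i> * of_real (t * (word_freq \<gamma> s + x - word_freq \<gamma> s'))))"
proof -
  let ?e = "\<lambda>u. exp (\<i> * of_real (t * u))"
  have cnj: "cnj (?e u) = inverse (?e u)" for u
    by (simp add: exp_cnj exp_minus)
  have combine: "?e u * inverse (?e v) * ?e x = ?e (u + x - v)" for u v
    by (simp add: algebra_simps exp_add exp_diff divide_inverse)
  have "of_real (norm (expsum k \<gamma> t) ^ (2 * N)) = (of_real ((norm (expsum k \<gamma> t))\<^sup>2))^N"
    by (simp add: power_mult)
  also have "\<dots> = expsum k \<gamma> t ^ N * cnj (expsum k \<gamma> t ^ N)"
    by (simp only: complex_norm_square power_mult_distrib complex_cnj_power)
  also have "\<dots> = (\<Sum>s\<in>words {0..k} N. ?e (word_freq \<gamma> s))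
      * (\<Sum>s'\<in>words {0..k} N. inverse (?e (word_freq \<gamma> s')))"
    by (simp only: expsum_power_eq_sum_words cnj_sum cnj)
  also have "\<dots> = (\<Sum>(s, s')\<in>words {0..k} N \<times> words {0..k} N.
      ?e (word_freq \<gamma> s) * inverse (?e (word_freq \<gamma> s')))"
    by (simp add: sum_product sum.cartesian_product)
  finally show ?thesis
    by (simp only: sum_distrib_right case_prod_unfold combine)
qed

lemma A_eq_card_solutions: "A k \<gamma> N x = of_nat (card (solutions k \<gamma> N x))"
proof -
  let ?W = "words {0..k} N \<times> words {0..k} N"
  have "((\<lambda>T. integral {-T..T} (\<lambda>t. of_real (norm (expsum k \<gamma> t) ^ (2 * N)) * exp (\<i> * of_real (t * x)))
           / of_real (2 * T))
      \<longlongrightarrow> of_nat (card {p\<in>?W. word_freq \<gamma> (fst p) + x - word_freq \<gamma> (snd p) = 0})) at_top"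
    unfolding norm_expsum_power_mult_exp_i case_prod_beta
    by (rule tendsto_mean_sum_exp_i) simp
  also have "{p\<in>?W. word_freq \<gamma> (fst p) + x - word_freq \<gamma> (snd p) = 0} = solutions k \<gamma> N x"
    by (auto simp: solutions_def)
  finally show ?thesis
    unfolding A_def by (rule tendsto_Lim[rotated]) simp
qed

section \<open>The lower bound at 0\<close>

definition balanced_words :: "nat \<Rightarrow> nat \<Rightarrow> nat list set" where
  "balanced_words k N =
     {s\<in>words {0..k} N. \<forall>i\<in>{1..k}. (count_list s i - N / (real k + 1))\<^sup>2 \<le> k * N}"

lemma card_words_count_list_far_le:
  assumes "i \<in> {1..k}" "N > 0"
  shows "card {s\<in>words {0..k} N. real k * N < (count_list s i - N / (real k + 1))\<^sup>2} \<le> (real k + 1) ^ N / (4 * real k)"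
proof -
  have "card {s\<in>words {0..k} N. real k * N < (count_in {i} s - N / (real k + 1))\<^sup>2} * (real k * N)
      \<le> N * (real k + 1) ^ N / 4"
    using card_words_count_in_deviation_le[where X = "{0..k}" and S = "{i}" and n = N and \<tau> = "real k * N"] assms
    by (simp add: add.commute)
  then show ?thesis
    using assms by (simp add: count_in_singleton field_simps)
qed

lemma card_balanced_words_ge: "3 / 4 * (real k + 1) ^ N \<le> card (balanced_words k N)"
proof (cases "k * N = 0")
  case True
  then have "balanced_words k N = words {0..k} N"
    by (auto simp: balanced_words_def words_def)
  then show ?thesis
    by (simp add: card_words add.commute)
next
  case False
  define far where "far i = {s\<in>words {0..k} N. k * N < (count_list s i - N / (real k + 1))\<^sup>2}" for i
  have "words {0..k} N - balanced_words k N = (\<Union>i\<in>{1..k}. far i)"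
    by (auto simp: balanced_words_def far_def)
  then have "card (words {0..k} N - balanced_words k N) \<le> (\<Sum>i\<in>{1..k}. card (far i))"
    by (simp add: card_UN_le)
  then have "real (card (words {0..k} N - balanced_words k N)) \<le> (\<Sum>i\<in>{1..k}. real (card (far i)))"
    by (simp flip: of_nat_sum)
  also have "\<dots> \<le> (\<Sum>i\<in>{1..k}. (real k + 1) ^ N / (4 * real k))"
    using card_words_count_list_far_le[of _ k N] False by (intro sum_mono) (auto simp: far_def)
  also have "\<dots> = (real k + 1) ^ N / 4"
    using False by simp
  finally have "real (card (words {0..k} N - balanced_words k N)) \<le> (real k + 1) ^ N / 4" .
  moreover have sub: "balanced_words k N \<subseteq> words {0..k} N"
    by (auto simp: balanced_words_def)
  then have "card (words {0..k} N - balanced_words k N) = card (words {0..k} N) - card (balanced_words k N)"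
    by (intro card_Diff_subset) (auto intro: finite_subset)
  then have "real (card (words {0..k} N - balanced_words k N)) = (real k + 1) ^ N - card (balanced_words k N)"
    using card_mono[OF _ sub] by (simp add: card_words add.commute)
  ultimately show ?thesis
    by linarith
qed

lemma word_freq_eq_sum_count_list:
  fixes \<gamma> :: "nat \<Rightarrow> real"
  assumes "set s \<subseteq> {0..k}"
  shows "word_freq \<gamma> s = (\<Sum>i\<in>{1..k}. count_list s i * \<gamma> i)"
  using assms
proof (induction s)
  case (Cons x s)
  have "(\<Sum>i\<in>{1..k}. of_bool (x = i) * \<gamma> i) = (\<Sum>i\<in>{1..k}. if x = i then \<gamma> i else 0)"
    by (intro sum.cong) auto
  also have "\<dots> = freq \<gamma> x"
    using Cons.prems by (simp add: sum.delta freq_def)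
  finally have "(\<Sum>i\<in>{1..k}. of_bool (x = i) * \<gamma> i) = freq \<gamma> x" .
  moreover have "real (count_list (x # s) i) * \<gamma> i = of_bool (x = i) * \<gamma> i + real (count_list s i) * \<gamma> i" for i
    by (simp add: distrib_right)
  ultimately show ?case
    using Cons by (simp add: word_freq_def sum.distrib del: count_list.simps)
qed (simp add: word_freq_def)

lemma card_count_vectors_balanced_le:
  assumes "N \<ge> 1"
  shows "card ((\<lambda>s. restrict (count_list s) {1..k}) ` balanced_words k N) \<le> (2 * sqrt k + 1) ^ k * sqrt N ^ k"
proof -
  define W where "W = {a::nat. \<bar>real a - N / (real k + 1)\<bar> \<le> sqrt (k * N)}"
  have "(real a - N / (real k + 1))\<^sup>2 \<le> k * N \<Longrightarrow> a \<in> W" for a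
    unfolding W_def by (metis mem_Collect_eq power2_abs real_le_rsqrt)
  then have "(\<lambda>s. restrict (count_list s) {1..k}) ` balanced_words k N \<subseteq> PiE {1..k} (\<lambda>_. W)"
    by (auto simp: balanced_words_def)
  then have "card ((\<lambda>s. restrict (count_list s) {1..k}) ` balanced_words k N) \<le> card (PiE {1..k} (\<lambda>_. W))"
    unfolding W_def by (intro card_mono finite_PiE finite_nat_abs_diff_le) auto
  then have "real (card ((\<lambda>s. restrict (count_list s) {1..k}) ` balanced_words k N)) \<le> real (card W) ^ k"
    by (simp add: card_PiE)
  also have "\<dots> \<le> (2 * sqrt (k * N) + 1) ^ k"
    unfolding W_def by (intro power_mono card_nat_abs_diff_le) auto
  also have "\<dots> \<le> ((2 * sqrt k + 1) * sqrt N) ^ k"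
    using assms by (intro power_mono) (auto simp: real_sqrt_mult algebra_simps)
  finally show ?thesis
    by (simp add: power_mult_distrib)
qed

lemma solutions_0_eq_collisions:
  "solutions k \<gamma> N 0 = {(s, s')\<in>words {0..k} N \<times> words {0..k} N. word_freq \<gamma> s = word_freq \<gamma> s'}"
  by (auto simp: solutions_def)

lemma card_solutions_0_ge:
  assumes "N \<ge> 1"
  shows "9 / 16 / (2 * sqrt k + 1) ^ k * (real k + 1) ^ (2 * N) \<le> card (solutions k \<gamma> N 0) * sqrt N ^ k"
proof -
  let ?G = "balanced_words k N"
  let ?cv = "\<lambda>s. restrict (count_list s) {1..k}"
  have G: "?G \<subseteq> words {0..k} N"
    by (auto simp: balanced_words_def)
  then have finG: "finite ?G"
    by (rule finite_subset) simp
  have "{(s, s')\<in>?G \<times> ?G. ?cv s = ?cv s'} \<subseteq> solutions k \<gamma> N 0"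
  proof safe
    fix s s' assume "s \<in> ?G" "s' \<in> ?G" and cv: "?cv s = ?cv s'"
    have "count_list s i = count_list s' i" if "i \<in> {1..k}" for i
      using fun_cong[OF cv, of i] that by simp
    moreover have "s \<in> words {0..k} N" "s' \<in> words {0..k} N"
      using \<open>s \<in> ?G\<close> \<open>s' \<in> ?G\<close> G by auto
    ultimately show "(s, s') \<in> solutions k \<gamma> N 0"
      by (auto simp: solutions_0_eq_collisions words_def word_freq_eq_sum_count_list intro!: sum.cong)
  qed
  then have collisions: "card {(s, s')\<in>?G \<times> ?G. ?cv s = ?cv s'} \<le> card (solutions k \<gamma> N 0)"
    by (rule card_mono[rotated]) simp
  have "(3 / 4 * (real k + 1) ^ N)\<^sup>2 \<le> (real (card ?G))\<^sup>2"
    using card_balanced_words_ge by (intro power_mono) auto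
  also have "\<dots> \<le> real (card (?cv ` ?G)) * card {(s, s')\<in>?G \<times> ?G. ?cv s = ?cv s'}"
    using card_square_le_card_image_mult_card_collisions[OF finG, of ?cv]
    by (simp flip: of_nat_power of_nat_mult)
  also have "\<dots> \<le> (2 * sqrt k + 1) ^ k * sqrt N ^ k * card (solutions k \<gamma> N 0)"
    using card_count_vectors_balanced_le[OF assms, of k] collisions by (intro mult_mono) auto
  finally have "9 / 16 * (real k + 1) ^ (2 * N) \<le> (2 * sqrt k + 1) ^ k * (card (solutions k \<gamma> N 0) * sqrt N ^ k)"
    by (simp add: power2_eq_square power_mult mult_ac)
  moreover have "0 < (2 * sqrt k + 1) ^ k"
    by (simp add: add_nonneg_pos)
  ultimately show ?thesis
    by (simp add: divide_le_eq mult_ac)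
qed

lemma card_solutions_0_lower_bound:
  "\<exists>c>0. \<forall>\<gamma> N. N \<ge> 1 \<longrightarrow>
     c * (real k + 1) ^ (2 * N) * real N powr (- real k / 2) \<le> card (solutions k \<gamma> N 0)"
proof (intro exI conjI allI impI)
  let ?c = "9 / 16 / (2 * sqrt k + 1) ^ k"
  show "0 < ?c"
    by (simp add: add_nonneg_pos)
  fix \<gamma> and N :: nat
  assume N: "N \<ge> 1"
  then have "0 < sqrt N ^ k"
    by simp
  then have bound: "?c * (real k + 1) ^ (2 * N) / sqrt N ^ k \<le> card (solutions k \<gamma> N 0)"
    using card_solutions_0_ge[OF N] by (rule pos_divide_le_eq[THEN iffD2])
  have powr: "real N powr (- real k / 2) = inverse (sqrt N ^ k)"
  proof -
    have "sqrt N ^ k = sqrt N powr real k"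
      using N by (simp add: powr_realpow)
    also have "\<dots> = real N powr (real k / 2)"
      by (simp add: powr_half_sqrt[symmetric] powr_powr)
    finally show ?thesis
      by (simp add: powr_minus)
  qed
  show "?c * (real k + 1) ^ (2 * N) * real N powr (- real k / 2) \<le> card (solutions k \<gamma> N 0)"
    using bound unfolding powr by (simp only: divide_inverse)
qed

section \<open>Shifting by a frequency\<close>

lemma card_word_freq_fibre_le:
  "card {s\<in>words {0..k} N. word_freq \<gamma> s = \<mu>} \<le> sqrt (card (solutions k \<gamma> N 0))"
proof (rule real_le_rsqrt)
  have "(card {s\<in>words {0..k} N. word_freq \<gamma> s = \<mu>})\<^sup>2 \<le> card (solutions k \<gamma> N 0)"
    unfolding solutions_0_eq_collisions by (rule card_fibre_square_le_card_collisions) simp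
  then show "(real (card {s\<in>words {0..k} N. word_freq \<gamma> s = \<mu>}))\<^sup>2 \<le> real (card (solutions k \<gamma> N 0))"
    by (simp only: of_nat_power[symmetric] of_nat_le_iff)
qed

lemma card_solutions_snd_in_le:
  assumes "B \<subseteq> words {0..k} N"
  shows "card {p\<in>solutions k \<gamma> N x. snd p \<in> B} \<le> card B * sqrt (card (solutions k \<gamma> N 0))"
proof -
  have finB: "finite B"
    using assms by (rule finite_subset) simp
  let ?F = "\<lambda>s'. {s\<in>words {0..k} N. word_freq \<gamma> s = word_freq \<gamma> s' - x}"
  have "{p\<in>solutions k \<gamma> N x. snd p \<in> B} \<subseteq> (\<Union>s'\<in>B. ?F s' \<times> {s'})"
    by (auto simp: solutions_def)
  then have "card {p\<in>solutions k \<gamma> N x. snd p \<in> B} \<le> card (\<Union>s'\<in>B. ?F s' \<times> {s'})"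
    by (rule card_mono[rotated]) (simp add: finB)
  also have "\<dots> \<le> (\<Sum>s'\<in>B. card (?F s' \<times> {s'}))"
    by (rule card_UN_le[OF finB])
  also have "\<dots> = (\<Sum>s'\<in>B. card (?F s'))"
    by (simp add: card_cartesian_product)
  finally have "real (card {p\<in>solutions k \<gamma> N x. snd p \<in> B}) \<le> (\<Sum>s'\<in>B. real (card (?F s')))"
    by (simp only: of_nat_sum[symmetric] of_nat_le_iff)
  also have "\<dots> \<le> (\<Sum>s'\<in>B. sqrt (card (solutions k \<gamma> N 0)))"
    by (intro sum_mono card_word_freq_fibre_le)
  finally show ?thesis
    by simp
qed

lemma word_freq_list_update:
  "l < length s \<Longrightarrow> word_freq \<gamma> (s[l := i]) = word_freq \<gamma> s - freq \<gamma> (s ! l) + freq \<gamma> i"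
  by (induction s arbitrary: l) (auto simp: word_freq_def split: nat.split)

lemma sum_count_0_le_sum_count:
  assumes j: "j \<in> {1..k}"
  shows "(\<Sum>p\<in>solutions k \<gamma> N 0. count_list (snd p) 0)
           \<le> (\<Sum>p\<in>solutions k \<gamma> N (\<gamma> j). count_list (snd p) j)"
proof -
  define pos where "pos x i = (SIGMA p:solutions k \<gamma> N x. {l. l < N \<and> snd p ! l = i})" for x i
  define change where "change = (\<lambda>((s :: nat list, s'), l). ((s, s'[l := j]), l::nat))"
  have card_pos: "card (pos x i) = (\<Sum>p\<in>solutions k \<gamma> N x. count_list (snd p) i)" for x i
    unfolding pos_def count_list_eq_card_positions
    by (subst card_SigmaI[OF finite_solutions]) (auto intro!: sum.cong simp: solutions_def words_def)
  have "inj_on change (pos 0 0)"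
    unfolding change_def
    by (rule inj_on_subset[OF inj_on_update_snd_at_known_entry]) (auto simp: pos_def)
  moreover have "change ` pos 0 0 \<subseteq> pos (\<gamma> j) j"
  proof (rule image_subsetI)
    fix p assume "p \<in> pos 0 0"
    then obtain s s' l where p: "p = ((s, s'), l)" and sol: "(s, s') \<in> solutions k \<gamma> N 0"
      and l: "l < N" "s' ! l = 0"
      by (auto simp: pos_def)
    then have "s'[l := j] \<in> words {0..k} N" "word_freq \<gamma> (s'[l := j]) = word_freq \<gamma> s' + \<gamma> j"
      using j by (auto simp: solutions_def words_def word_freq_list_update freq_def
          dest: set_update_subset_insert[THEN subsetD])
    moreover have "s'[l := j] ! l = j"
      using sol l by (simp add: solutions_def words_def)
    ultimately show "change p \<in> pos (\<gamma> j) j"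
      using sol l by (simp add: change_def pos_def p solutions_def)
  qed
  moreover have "finite (pos (\<gamma> j) j)"
    by (simp add: pos_def)
  ultimately have "card (pos 0 0) \<le> card (pos (\<gamma> j) j)"
    by (metis card_image card_mono)
  then show ?thesis
    by (simp add: card_pos)
qed

lemma count_list_0_add_count_in:
  fixes s :: "nat list"
  shows "set s \<subseteq> {0..k} \<Longrightarrow> count_list s 0 + count_in {1..k} s = length s"
proof (induction s)
  case (Cons a s)
  then show ?case
    by (cases "a = 0") auto
qed simp

lemma card_solutions_atypical_le:
  fixes k N :: nat and \<delta> :: real
  assumes "S \<subseteq> {0..k}" "0 \<le> \<delta>" "\<delta> \<le> 1"
  defines "K \<equiv> real k + 1"
  shows "card {p\<in>solutions k \<gamma> N x. N * (card S / K + \<delta> / K) \<le> count_in S (snd p)}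
           \<le> exp (- real N * (\<delta> / K)\<^sup>2 / 4) * K ^ N * sqrt (card (solutions k \<gamma> N 0))"
proof -
  define B where "B = {s\<in>words {0..k} N. N * (card S / card {0..k} + \<delta> / K) \<le> count_in S s}"
  have "\<delta> / K \<le> 2"
    using assms by (simp add: K_def divide_le_eq)
  then have card_B: "card B \<le> exp (- real N * (\<delta> / K)\<^sup>2 / 4) * K ^ N"
    unfolding B_def using assms
    by (intro card_words_count_in_large_le[THEN order_trans]) (auto simp: K_def add.commute)
  have "{p\<in>solutions k \<gamma> N x. N * (card S / K + \<delta> / K) \<le> count_in S (snd p)}
      = {p\<in>solutions k \<gamma> N x. snd p \<in> B}"
    by (auto simp: B_def K_def solutions_def add.commute)
  also have "real (card \<dots>) \<le> card B * sqrt (card (solutions k \<gamma> N 0))"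
    by (rule card_solutions_snd_in_le) (auto simp: B_def)
  also have "\<dots> \<le> exp (- real N * (\<delta> / K)\<^sup>2 / 4) * K ^ N * sqrt (card (solutions k \<gamma> N 0))"
    using card_B by (rule mult_right_mono) simp
  finally show ?thesis .
qed

lemma sum_count_list_0_ge:
  fixes k N :: nat and \<delta> :: real
  assumes "0 \<le> \<delta>" "\<delta> \<le> 1"
  defines "K \<equiv> real k + 1"
  shows "N / K * (1 - \<delta>) * card (solutions k \<gamma> N 0)
           - N * (exp (- real N * (\<delta> / K)\<^sup>2 / 4) * K ^ N * sqrt (card (solutions k \<gamma> N 0)))
         \<le> (\<Sum>p\<in>solutions k \<gamma> N 0. real (count_list (snd p) 0))"
proof -
  let ?E = "solutions k \<gamma> N 0"
  let ?atypical = "\<lambda>p. N * (k / K + \<delta> / K) \<le> count_in {1..k} (snd p)"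
  have K: "1 \<le> K"
    by (simp add: K_def)
  have "N / K * (1 - \<delta>) \<le> count_list (snd p) 0" if "p \<in> ?E" "\<not> ?atypical p" for p
  proof -
    have "snd p \<in> words {0..k} N"
      using that by (auto simp: solutions_def)
    then have "real (count_list (snd p) 0) + count_in {1..k} (snd p) = N"
      using count_list_0_add_count_in[of "snd p" k] by (simp add: words_def flip: of_nat_add)
    moreover have "N * (k / K + \<delta> / K) = N * (K - (1 - \<delta>)) / K"
      by (simp add: K_def add_divide_distrib[symmetric])
    moreover have "\<dots> = N - N / K * (1 - \<delta>)"
      using K by (simp add: field_simps)
    ultimately show ?thesis
      using that(2) by linarith
  qed
  then have "N / K * (1 - \<delta>) * card ?E - N / K * (1 - \<delta>) * card {p\<in>?E. ?atypical p}
      \<le> (\<Sum>p\<in>?E. real (count_list (snd p) 0))"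
    by (intro sum_ge_off_exceptional) auto
  moreover have "N / K * (1 - \<delta>) \<le> N"
    using assms K by (simp add: field_simps mult_left_le)
  then have "N / K * (1 - \<delta>) * card {p\<in>?E. ?atypical p}
      \<le> N * (exp (- real N * (\<delta> / K)\<^sup>2 / 4) * K ^ N * sqrt (card ?E))"
    using card_solutions_atypical_le[where S = "{1..k}" and k = k and \<delta> = \<delta> and N = N and \<gamma> = \<gamma> and x = 0] assms K
    by (intro mult_mono) (auto simp: K_def)
  ultimately show ?thesis
    by linarith
qed

lemma sum_count_list_le:
  fixes k N :: nat and \<delta> :: real
  assumes j: "j \<in> {1..k}" and "0 \<le> \<delta>" "\<delta> \<le> 1"
  defines "K \<equiv> real k + 1"
  shows "(\<Sum>p\<in>solutions k \<gamma> N x. real (count_list (snd p) j))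
         \<le> N / K * (1 + \<delta>) * card (solutions k \<gamma> N x)
           + N * (exp (- real N * (\<delta> / K)\<^sup>2 / 4) * K ^ N * sqrt (card (solutions k \<gamma> N 0)))"
proof -
  let ?E = "solutions k \<gamma> N x"
  let ?atypical = "\<lambda>p. N * (1 / K + \<delta> / K) \<le> count_in {j} (snd p)"
  have "count_list (snd p) j \<le> N / K * (1 + \<delta>)" if "\<not> ?atypical p" for p
    using that by (simp add: count_in_singleton add_divide_distrib[symmetric])
  moreover have "real (count_list (snd p) j) \<le> N" if "p \<in> ?E" for p
    using that count_le_length[of "snd p" j] by (auto simp: solutions_def words_def)
  ultimately have "(\<Sum>p\<in>?E. real (count_list (snd p) j))
      \<le> N / K * (1 + \<delta>) * card ?E + real N * card {p\<in>?E. ?atypical p}"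
    using assms by (intro sum_le_off_exceptional) (auto simp: K_def)
  moreover have "real N * card {p\<in>?E. ?atypical p}
      \<le> N * (exp (- real N * (\<delta> / K)\<^sup>2 / 4) * K ^ N * sqrt (card (solutions k \<gamma> N 0)))"
    using card_solutions_atypical_le[where S = "{j}" and k = k and \<delta> = \<delta> and N = N and \<gamma> = \<gamma> and x = x] assms
    by (intro mult_left_mono) (auto simp: K_def)
  ultimately show ?thesis
    by linarith
qed

lemma card_solutions_gamma_ge:
  fixes k N :: nat and \<delta> :: real
  assumes j: "j \<in> {1..k}" and "N \<ge> 1" "0 \<le> \<delta>" "\<delta> \<le> 1"
  defines "K \<equiv> real k + 1"
  defines "\<beta> \<equiv> exp (- real N * (\<delta> / K)\<^sup>2 / 4) * K ^ N"
  shows "(1 - \<delta>) * card (solutions k \<gamma> N 0) - 2 * K * \<beta> * sqrt (card (solutions k \<gamma> N 0))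
           \<le> (1 + \<delta>) * card (solutions k \<gamma> N (\<gamma> j))"
proof -
  let ?E0 = "card (solutions k \<gamma> N 0)" and ?Ej = "card (solutions k \<gamma> N (\<gamma> j))"
  have "N / K * (1 - \<delta>) * ?E0 - N * (\<beta> * sqrt ?E0)
      \<le> (\<Sum>p\<in>solutions k \<gamma> N 0. real (count_list (snd p) 0))"
    using sum_count_list_0_ge[where k = k and N = N and \<delta> = \<delta> and \<gamma> = \<gamma>] assms
    by (simp add: K_def \<beta>_def)
  also have "\<dots> \<le> (\<Sum>p\<in>solutions k \<gamma> N (\<gamma> j). real (count_list (snd p) j))"
    using sum_count_0_le_sum_count[OF j, of \<gamma> N] by (simp flip: of_nat_sum)
  also have "\<dots> \<le> N / K * (1 + \<delta>) * ?Ej + N * (\<beta> * sqrt ?E0)"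
    using sum_count_list_le[OF j, where N = N and \<delta> = \<delta> and \<gamma> = \<gamma> and x = "\<gamma> j"] assms
    by (simp add: K_def \<beta>_def)
  finally have main: "N / K * (1 - \<delta>) * ?E0 - 2 * (N * (\<beta> * sqrt ?E0)) \<le> N / K * (1 + \<delta>) * ?Ej"
    by linarith
  have K: "0 < K"
    by (simp add: K_def)
  have "N / K * ((1 - \<delta>) * ?E0 - 2 * K * \<beta> * sqrt ?E0) = N / K * (1 - \<delta>) * ?E0 - 2 * (N * (\<beta> * sqrt ?E0))"
    using K by (simp add: field_simps)
  with main have "N / K * ((1 - \<delta>) * ?E0 - 2 * K * \<beta> * sqrt ?E0) \<le> N / K * ((1 + \<delta>) * ?Ej)"
    by (simp add: mult.assoc)
  moreover have "0 < N / K"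
    using assms K by simp
  ultimately show ?thesis
    by (rule mult_left_le_imp_le)
qed

lemma tendsto_power_mult_exp_neg:
  fixes c :: real
  assumes "0 < c"
  shows "(\<lambda>n. real n ^ m * exp (- c * real n)) \<longlonglongrightarrow> 0"
proof -
  have "filterlim (\<lambda>n. c * real n) at_top sequentially"
    using assms by (intro filterlim_tendsto_pos_mult_at_top[OF tendsto_const] filterlim_real_sequentially)
  then have "(\<lambda>n. (c * real n) ^ m / exp (c * real n)) \<longlonglongrightarrow> 0"
    by (rule filterlim_compose[OF tendsto_power_div_exp_0])
  then have "(\<lambda>n. (c * real n) ^ m / exp (c * real n) / c ^ m) \<longlonglongrightarrow> 0 / c ^ m"
    using assms by (intro tendsto_divide tendsto_const) auto
  moreover have "(c * real n) ^ m / exp (c * real n) / c ^ m = real n ^ m * exp (- c * real n)" for n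
    using assms by (simp add: power_mult_distrib exp_minus field_simps)
  ultimately show ?thesis
    by simp
qed

lemma atypical_term_le:
  fixes k N :: nat and \<delta> :: real
  defines "K \<equiv> real k + 1" and "c \<equiv> 9 / 16 / (2 * sqrt k + 1) ^ k"
  assumes N: "N \<ge> 1" and "0 < \<delta>"
    and small: "real N ^ k * exp (- ((\<delta> / K)\<^sup>2 / 2) * real N) \<le> \<delta>\<^sup>2 * c / (4 * K\<^sup>2)"
  shows "2 * K * (exp (- real N * (\<delta> / K)\<^sup>2 / 4) * K ^ N) * sqrt (card (solutions k \<gamma> N 0))
           \<le> \<delta> * card (solutions k \<gamma> N 0)"
proof -
  define E where "E = real (card (solutions k \<gamma> N 0))"
  define \<beta> where "\<beta> = exp (- real N * (\<delta> / K)\<^sup>2 / 4) * K ^ N"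
  have "0 < K"
    by (simp add: K_def)
  have "real N \<le> (real N)\<^sup>2"
    using N by (simp add: power2_eq_square)
  then have "sqrt N ^ k \<le> real N ^ k"
    by (intro power_mono real_le_lsqrt) auto
  then have "sqrt N ^ k * exp (- ((\<delta> / K)\<^sup>2 / 2) * real N) \<le> \<delta>\<^sup>2 * c / (4 * K\<^sup>2)"
    using small by (meson exp_ge_zero mult_right_mono order_trans)
  have "(2 * K * \<beta>)\<^sup>2 * sqrt N ^ k = 4 * K\<^sup>2 * (sqrt N ^ k * exp (- ((\<delta> / K)\<^sup>2 / 2) * real N)) * K ^ (2 * N)"
    by (simp add: \<beta>_def power_mult_distrib power_mult exp_double[symmetric] algebra_simps)
  also have "\<dots> \<le> 4 * K\<^sup>2 * (\<delta>\<^sup>2 * c / (4 * K\<^sup>2)) * K ^ (2 * N)"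
    using \<open>sqrt N ^ k * _ \<le> _\<close> \<open>0 < K\<close> by (intro mult_right_mono mult_left_mono) auto
  also have "\<dots> = \<delta>\<^sup>2 * (c * K ^ (2 * N))"
    using \<open>0 < K\<close> by (simp add: field_simps)
  also have "\<dots> \<le> \<delta>\<^sup>2 * (E * sqrt N ^ k)"
    using card_solutions_0_ge[OF N, of k \<gamma>] unfolding E_def c_def K_def by (rule mult_left_mono) simp
  finally have "(2 * K * \<beta>)\<^sup>2 \<le> \<delta>\<^sup>2 * E"
    using N by simp
  then have "2 * K * \<beta> \<le> sqrt (\<delta>\<^sup>2 * E)"
    by (rule real_le_rsqrt)
  also have "\<dots> = \<delta> * sqrt E"
    using \<open>0 < \<delta>\<close> by (simp add: real_sqrt_mult)
  finally have "2 * K * \<beta> * sqrt E \<le> \<delta> * sqrt E * sqrt E"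
    by (rule mult_right_mono) (simp add: E_def)
  then show ?thesis
    by (simp add: E_def \<beta>_def mult.assoc)
qed

lemma eventually_atypical_term_le:
  fixes k :: nat and \<delta> :: real
  assumes "0 < \<delta>"
  defines "K \<equiv> real k + 1"
  shows "\<exists>N0. \<forall>\<gamma> N. N \<ge> N0 \<longrightarrow>
           2 * K * (exp (- real N * (\<delta> / K)\<^sup>2 / 4) * K ^ N) * sqrt (card (solutions k \<gamma> N 0))
             \<le> \<delta> * card (solutions k \<gamma> N 0)"
proof -
  define c where "c = 9 / 16 / (2 * sqrt k + 1) ^ k"
  have "0 < K" "0 < c"
    by (simp_all add: K_def c_def add_nonneg_pos)
  have "(\<lambda>n. real n ^ k * exp (- ((\<delta> / K)\<^sup>2 / 2) * real n)) \<longlonglongrightarrow> 0"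
    using assms \<open>0 < K\<close> by (intro tendsto_power_mult_exp_neg) simp
  moreover have "0 < \<delta>\<^sup>2 * c / (4 * K\<^sup>2)"
    using assms \<open>0 < c\<close> \<open>0 < K\<close> by simp
  ultimately have "\<forall>\<^sub>F N in sequentially.
      real N ^ k * exp (- ((\<delta> / K)\<^sup>2 / 2) * real N) < \<delta>\<^sup>2 * c / (4 * K\<^sup>2)"
    by (rule order_tendstoD(2))
  then obtain N1 where
    "\<And>N. N \<ge> N1 \<Longrightarrow> real N ^ k * exp (- ((\<delta> / K)\<^sup>2 / 2) * real N) < \<delta>\<^sup>2 * c / (4 * K\<^sup>2)"
    by (auto simp: eventually_sequentially)
  then show ?thesis
    using assms unfolding K_def c_def
    by (intro exI[of _ "max N1 1"] allI impI atypical_term_le) (auto intro: less_imp_le)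
qed

lemma eventually_card_solutions_gamma_ge:
  fixes k :: nat and \<epsilon> :: real
  assumes "0 < \<epsilon>"
  shows "\<exists>N0. \<forall>\<gamma> j N. j \<in> {1..k} \<longrightarrow> N \<ge> N0 \<longrightarrow>
           (1 - \<epsilon>) * card (solutions k \<gamma> N 0) \<le> card (solutions k \<gamma> N (\<gamma> j))"
proof -
  define \<delta> where "\<delta> = min \<epsilon> 1 / 3"
  have \<delta>: "0 < \<delta>" "\<delta> \<le> 1" "3 * \<delta> \<le> \<epsilon>"
    using assms by (auto simp: \<delta>_def)
  obtain N0 where N0: "\<And>\<gamma> N. N \<ge> N0 \<Longrightarrow>
      2 * (real k + 1) * (exp (- real N * (\<delta> / (real k + 1))\<^sup>2 / 4) * (real k + 1) ^ N)
        * sqrt (card (solutions k \<gamma> N 0)) \<le> \<delta> * card (solutions k \<gamma> N 0)"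
    using eventually_atypical_term_le[OF \<delta>(1), of k] by blast
  show ?thesis
  proof (intro exI[of _ "max N0 1"] allI impI)
    fix \<gamma> j N assume j: "j \<in> {1..k}" and N: "max N0 1 \<le> N"
    let ?E0 = "real (card (solutions k \<gamma> N 0))" and ?Ej = "real (card (solutions k \<gamma> N (\<gamma> j)))"
    have "(1 - \<delta>) * ?E0 - \<delta> * ?E0 \<le> (1 + \<delta>) * ?Ej"
      using card_solutions_gamma_ge[OF j _ less_imp_le[OF \<delta>(1)] \<delta>(2), of N \<gamma>] N0[of N \<gamma>] N
      by (simp add: mult.assoc)
    moreover have "(1 - \<epsilon>) * (1 + \<delta>) * ?E0 \<le> (1 - 2 * \<delta>) * ?E0"
    proof (rule mult_right_mono)
      have "(1 - \<epsilon>) * (1 + \<delta>) = 1 - 2 * \<delta> - ((\<epsilon> - 3 * \<delta>) + \<delta> * \<epsilon>)"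
        by (simp add: algebra_simps)
      moreover have "0 \<le> \<delta> * \<epsilon>"
        using \<delta> assms by simp
      ultimately show "(1 - \<epsilon>) * (1 + \<delta>) \<le> 1 - 2 * \<delta>"
        using \<delta> by linarith
    qed simp
    ultimately have "(1 + \<delta>) * ((1 - \<epsilon>) * ?E0) \<le> (1 + \<delta>) * ?Ej"
      by (simp add: algebra_simps)
    then show "(1 - \<epsilon>) * ?E0 \<le> ?Ej"
      using \<delta> by simp
  qed
qed

theorem lemma4p2:
  shows "(\<forall>k::nat. \<exists>c>0. \<forall>\<gamma>::nat \<Rightarrow> real. inj_on \<gamma> {1..k} \<longrightarrow>
            (\<forall>N::nat. N \<ge> 1 \<longrightarrow>
               Re (A k \<gamma> N 0) \<ge> c * (real k + 1) ^ (2 * N) * real N powr (- real k / 2)))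
       \<and> (\<forall>k::nat. \<forall>\<epsilon>::real. \<epsilon> > 0 \<longrightarrow> (\<exists>N0::nat. \<forall>\<gamma>::nat \<Rightarrow> real. inj_on \<gamma> {1..k} \<longrightarrow>
            (\<forall>j\<in>{1..k}. \<forall>N\<ge>N0. Re (A k \<gamma> N (\<gamma> j)) \<ge> (1 - \<epsilon>) * Re (A k \<gamma> N 0))))"
proof (intro conjI allI impI)
  fix k :: nat
  obtain c where "c > 0" and "\<And>\<gamma> N. N \<ge> 1 \<Longrightarrow>
      c * (real k + 1) ^ (2 * N) * real N powr (- real k / 2) \<le> card (solutions k \<gamma> N 0)"
    using card_solutions_0_lower_bound[of k] by blast
  then show "\<exists>c>0. \<forall>\<gamma>::nat \<Rightarrow> real. inj_on \<gamma> {1..k} \<longrightarrow> (\<forall>N::nat. N \<ge> 1 \<longrightarrow>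
      Re (A k \<gamma> N 0) \<ge> c * (real k + 1) ^ (2 * N) * real N powr (- real k / 2))"
    by (auto simp: A_eq_card_solutions)
next
  fix k :: nat and \<epsilon> :: real
  assume "\<epsilon> > 0"
  then obtain N0 where "\<And>\<gamma> j N. j \<in> {1..k} \<Longrightarrow> N \<ge> N0 \<Longrightarrow>
      (1 - \<epsilon>) * card (solutions k \<gamma> N 0) \<le> card (solutions k \<gamma> N (\<gamma> j))"
    using eventually_card_solutions_gamma_ge[of \<epsilon> k] by blast
  then show "\<exists>N0::nat. \<forall>\<gamma>::nat \<Rightarrow> real. inj_on \<gamma> {1..k} \<longrightarrow>
      (\<forall>j\<in>{1..k}. \<forall>N\<ge>N0. Re (A k \<gamma> N (\<gamma> j)) \<ge> (1 - \<epsilon>) * Re (A k \<gamma> N 0))"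
    by (intro exI[of _ N0]) (auto simp: A_eq_card_solutions)
qed

end
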